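(* Let $t\ge 1$ and $c\in\mathbb{Z}$. Then \[ \begin{bmatrix}K;c+2\\ t\end{bmatrix}=(q^t+q^{-t})\begin{bmatrix}K;c+1\\ t\end{bmatrix}-\begin{bmatrix}K;c\\ t\end{bmatrix}+\begin{bmatrix}K;c\\ t-2\end{bmatrix}. \]
   Context: Let $q$ be an indeterminate and work in the Laurent polynomial ring $\mathbb{Q}(q)[K,K^{-1}]$ (the Cartan part of $\mathcal{U}_q(\mathfrak{sl}_2)$). Let $\{n\}_q=\frac{q^n-q^{-n}}{q-q^{-1}}$, $\{n\}_q!=\{n\}_q\cdots\{1\}_q$, $[K;a]=\frac{q^aK-q^{-a}K^{-1}}{q-q^{-1}}$ for $a\in\mathbb{Z}$, and for $c\in\mathbb{Z}$, $t\in\mathbb{N}_0$, $\begin{bmatrix}K;c\\ t\end{bmatrix}=\frac{[K;c][K;c-1]\cdots[K;c-t+1]}{\{t\}_q!}$, with $\begin{bmatrix}K;c\\ 0\end{bmatrix}=1$ and $\begin{bmatrix}K;c\\ t\end{bmatrix}=0$ for $t<0$. *)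

theory Defs
  imports "HOL-Computational_Algebra.Formal_Laurent_Series" "HOL-Computational_Algebra.Fraction_Field"
begin

definition qint :: "'a::field \<Rightarrow> int \<Rightarrow> 'a" where
  "qint q n = (q powi n - q powi (-n)) / (q - inverse q)"

definition qfact :: "'a::field \<Rightarrow> nat \<Rightarrow> 'a" where
  "qfact q t = (\<Prod>i\<in>{1..t}. qint q (int i))"

definition Kbr :: "'a::field \<Rightarrow> 'a \<Rightarrow> int \<Rightarrow> 'a" where
  "Kbr q K a = (q powi a * K - q powi (-a) * inverse K) / (q - inverse q)"

definition Kbinom :: "'a::field \<Rightarrow> 'a \<Rightarrow> int \<Rightarrow> int \<Rightarrow> 'a" where
  "Kbinom q K c t =
     (if t < 0 then 0
      else (\<Prod>j\<in>{0..<nat t}. Kbr q K (c - int j)) / qfact q (nat t))"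

text \<open>The concrete setting: Q(q) = rat poly fract; Q(q)[K,K^-1] embedded in the
  Laurent series field over Q(q), with K = fls_X and q a constant.\<close>

definition qQ :: "rat poly fract" where
  "qQ = Fract [:0, 1:] 1"

definition qL :: "rat poly fract fls" where
  "qL = fls_const qQ"

definition KL :: "rat poly fract fls" where
  "KL = fls_X"

end

theory Submission
  imports Defs
begin

(* Writing z = q^a K, the bracket [K;a] is (z - z^-1)/(q - q^-1). Hence the brackets satisfy
   the recurrence of q^a in a, and a product of two brackets obeys the quadratic relation
   Kbr_mult_Kbr_eq, whose constant term is the product {t-1}{t} of q-integers. Splitting off
   the two outermost factors of each numerator of order t >= 2 reduces the claim to that
   relation; the constant term cancels the two top factors of {t}!, leaving the binomial of
   order t - 2. For t = 1 the claim is the recurrence itself. The only property of Q(q) used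
   is that q is not a root of unity, so that the q-integers {t-1}, {t} do not vanish. *)

lemma Kbr_eq: "Kbr q K a = (q powi a * K - inverse (q powi a * K)) / (q - inverse q)"
  by (simp add: Kbr_def power_int_minus mult.commute)

lemma qint_eq: "qint q n = (q powi n - inverse (q powi n)) / (q - inverse q)"
  by (simp add: qint_def power_int_minus)

lemma Kbr_recurrence:
  fixes q K :: "'a::field"
  assumes "q \<noteq> 0"
  shows "Kbr q K (c + 2) = (q + inverse q) * Kbr q K (c + 1) - Kbr q K c"
proof -
  define z where "z = q powi c * K"
  have "q powi (c + 2) * K = q * q * z" "q powi (c + 1) * K = q * z"
    using assms by (simp_all add: z_def power_int_add power2_eq_square)
  moreover have "q * q * z - inverse (q * q * z)
      = (q + inverse q) * (q * z - inverse (q * z)) - (z - inverse z)"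
    using assms by (cases "z = 0") (simp_all add: field_simps)
  ultimately show ?thesis
    unfolding Kbr_eq z_def[symmetric] by (simp flip: diff_divide_distrib)
qed

lemma Kbr_mult_Kbr_eq:
  fixes q K :: "'a::field"
  assumes "q \<noteq> 0" and "K \<noteq> 0"
  shows "Kbr q K (c + 2) * Kbr q K (c + 1)
    = (q powi t + q powi (-t)) * Kbr q K (c + 1) * Kbr q K (c + 2 - t)
      - Kbr q K (c + 2 - t) * Kbr q K (c + 1 - t) + qint q (t - 1) * qint q t"
proof -
  define z where "z = q powi (c + 1) * K"
  define v where "v = q powi t"
  have "z \<noteq> 0" "v \<noteq> 0"
    using assms by (simp_all add: z_def v_def)
  have "q powi (c + 2) * K = q * z" "q powi (c + 2 - t) * K = q * z / v"
    "q powi (c + 1 - t) * K = z / v" "q powi (t - 1) = v / q" "q powi (-t) = inverse v"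
    using assms by (simp_all add: z_def v_def power_int_add power_int_diff power_int_minus
        power2_eq_square flip: add_diff_eq)
  moreover have "(q * z - inverse (q * z)) * (z - inverse z)
      = (v + inverse v) * (z - inverse z) * (q * z / v - inverse (q * z / v))
        - (q * z / v - inverse (q * z / v)) * (z / v - inverse (z / v))
        + (v / q - inverse (v / q)) * (v - inverse v)"
    using assms \<open>z \<noteq> 0\<close> \<open>v \<noteq> 0\<close> by (simp add: field_simps)
  ultimately show ?thesis
    unfolding Kbr_eq qint_eq z_def[symmetric] v_def[symmetric]
    by (simp add: times_divide_times_eq flip: add_divide_distrib diff_divide_distrib)
qed

lemma Kbinom_of_nat: "Kbinom q K c (int n) = (\<Prod>j<n. Kbr q K (c - int j)) / qfact q n"
  by (simp add: Kbinom_def atLeast0LessThan)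

lemma qfact_Suc: "qfact q (Suc n) = qfact q n * qint q (int (Suc n))"
  by (simp add: qfact_def)

lemma qint_nonzero_if_not_root_of_unity:
  fixes q :: "'a::field"
  assumes "q \<noteq> 0" and not_root: "\<And>m. m > 0 \<Longrightarrow> q ^ m \<noteq> 1" and "n > 0"
  shows "qint q (int n) \<noteq> 0"
proof -
  have "q ^ k - inverse (q ^ k) \<noteq> 0" if "k > 0" for k
  proof
    assume "q ^ k - inverse (q ^ k) = 0"
    then have "q ^ (k + k) = q ^ k * inverse (q ^ k)"
      by (simp only: power_add right_minus_eq)
    also have "\<dots> = 1"
      using \<open>q \<noteq> 0\<close> by simp
    finally show False
      using not_root \<open>k > 0\<close> by simp
  qed
  from this [of 1] this [of n] \<open>n > 0\<close> show ?thesis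
    by (simp add: qint_eq)
qed

lemma Kbinom_recurrence_one:
  fixes q K :: "'a::field"
  assumes "q \<noteq> 0"
  shows "Kbinom q K (c + 2) 1 = (q + inverse q) * Kbinom q K (c + 1) 1 - Kbinom q K c 1"
  using Kbr_recurrence [OF assms, of K c]
  by (simp add: Kbinom_def qfact_def diff_divide_distrib)

lemma Kbinom_recurrence_ge_2:
  fixes q K :: "'a::field"
  assumes "q \<noteq> 0" and "K \<noteq> 0" and "t \<ge> 2"
    and "qint q (t - 1) \<noteq> 0" and "qint q t \<noteq> 0"
  shows "Kbinom q K (c + 2) t
     = (q powi t + q powi (-t)) * Kbinom q K (c + 1) t - Kbinom q K c t + Kbinom q K c (t - 2)"
proof -
  define n where "n = nat (t - 2)"
  have t: "t = int (Suc (Suc n))"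
    using \<open>t \<ge> 2\<close> by (simp add: n_def)
  define w where "w = q powi t + q powi (-t)"
  define P where "P = (\<Prod>j<n. Kbr q K (c - int j))"
  define F where "F = qfact q n"
  define x where "x = qint q (t - 1)"
  define y where "y = qint q t"
  have num2: "(\<Prod>j<Suc (Suc n). Kbr q K (c + 2 - int j)) = Kbr q K (c + 2) * Kbr q K (c + 1) * P"
    unfolding prod.lessThan_Suc_shift by (simp add: P_def algebra_simps)
  have num1: "(\<Prod>j<Suc (Suc n). Kbr q K (c + 1 - int j)) = Kbr q K (c + 1) * P * Kbr q K (c - int n)"
    by (subst prod.lessThan_Suc_shift) (simp add: P_def algebra_simps)
  have num0: "(\<Prod>j<Suc (Suc n). Kbr q K (c - int j)) = P * Kbr q K (c - int n) * Kbr q K (c - int n - 1)"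
    by (simp add: P_def algebra_simps)
  have den: "qfact q (Suc (Suc n)) = F * x * y"
    by (simp add: qfact_Suc F_def x_def y_def t algebra_simps)
  have key: "Kbr q K (c + 2) * Kbr q K (c + 1)
      = w * Kbr q K (c + 1) * Kbr q K (c - int n) - Kbr q K (c - int n) * Kbr q K (c - int n - 1) + x * y"
    using Kbr_mult_Kbr_eq [OF assms(1,2), of c t] by (simp add: w_def x_def y_def t algebra_simps)
  have "x \<noteq> 0" "y \<noteq> 0"
    using assms(4,5) by (simp_all add: x_def y_def)
  have "Kbinom q K c (t - 2) = P / F"
    by (simp add: t P_def F_def Kbinom_of_nat)
  moreover have "Kbinom q K (c + 2) t = Kbr q K (c + 2) * Kbr q K (c + 1) * P / (F * x * y)"
    "Kbinom q K (c + 1) t = Kbr q K (c + 1) * P * Kbr q K (c - int n) / (F * x * y)"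
    "Kbinom q K c t = P * Kbr q K (c - int n) * Kbr q K (c - int n - 1) / (F * x * y)"
    unfolding t Kbinom_of_nat num2 num1 num0 den by simp_all
  moreover have "w * (Kbr q K (c + 1) * P * Kbr q K (c - int n) / (F * x * y))
      - P * Kbr q K (c - int n) * Kbr q K (c - int n - 1) / (F * x * y) + P / F
      = (w * Kbr q K (c + 1) * Kbr q K (c - int n) - Kbr q K (c - int n) * Kbr q K (c - int n - 1)
        + x * y) * P / (F * x * y)"
    using \<open>x \<noteq> 0\<close> \<open>y \<noteq> 0\<close> by (cases "F = 0") (simp_all add: field_simps)
  ultimately show ?thesis
    by (simp only: key w_def)
qed

theorem Kbinom_recurrence:
  fixes q K :: "'a::field"
  assumes "q \<noteq> 0" and "K \<noteq> 0" and "\<And>m. m > 0 \<Longrightarrow> q ^ m \<noteq> 1" and "t \<ge> 1"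
  shows "Kbinom q K (c + 2) t
     = (q powi t + q powi (-t)) * Kbinom q K (c + 1) t - Kbinom q K c t + Kbinom q K c (t - 2)"
proof (cases "t = 1")
  case True
  then show ?thesis
    using Kbinom_recurrence_one [OF assms(1)] by (simp add: Kbinom_def)
next
  case False
  then have "t \<ge> 2"
    using \<open>t \<ge> 1\<close> by simp
  have "qint q (int m) \<noteq> 0" if "m > 0" for m
    using qint_nonzero_if_not_root_of_unity [OF assms(1,3) that] .
  from this [of "nat (t - 1)"] this [of "nat t"] have "qint q (t - 1) \<noteq> 0" "qint q t \<noteq> 0"
    using \<open>t \<ge> 2\<close> by simp_all
  with assms(1,2) \<open>t \<ge> 2\<close> show ?thesis
    by (rule Kbinom_recurrence_ge_2)
qed

lemma qQ_power_neq_1: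
  assumes "m > 0"
  shows "qQ ^ m \<noteq> 1"
proof
  assume "qQ ^ m = 1"
  moreover have "qQ ^ m = Fract ([:0, 1:] ^ m) 1"
    unfolding qQ_def by (induction m) (simp_all add: One_fract_def)
  ultimately have "([:0, 1:] :: rat poly) ^ m = 1"
    by (simp add: One_fract_def eq_fract)
  then have "degree (([:0, 1:] :: rat poly) ^ m) = 0"
    by simp
  with assms show False
    by (simp add: degree_power_eq)
qed

lemma qL_power_neq_1: "m > 0 \<Longrightarrow> qL ^ m \<noteq> 1"
  by (simp add: qL_def qQ_power_neq_1 flip: fls_const_power)

lemma qL_nonzero: "qL \<noteq> 0"
  by (simp add: qL_def qQ_def Zero_fract_def eq_fract)

lemma KL_nonzero: "KL \<noteq> 0"
  by (simp add: KL_def)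

theorem proposition6p1:
  fixes t c :: int
  assumes "t \<ge> 1"
  shows "Kbinom qL KL (c + 2) t
     = (qL powi t + qL powi (-t)) * Kbinom qL KL (c + 1) t
       - Kbinom qL KL c t + Kbinom qL KL c (t - 2)"
  by (rule Kbinom_recurrence [OF qL_nonzero KL_nonzero qL_power_neq_1 assms])

end
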